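(* Let $\mu$ be an infinite cardinal and $F$ a uniform filter on $\mu$. If $\kappa$ is a strongly inaccessible cardinal such that every $\kappa$-Aronszajn tree admits an $F$-ascent path, then $\mathrm{Pr}_1(\kappa,\kappa,2,(2,\mu^+))$ fails.
   Context: A filter $F$ on $\mu$ is uniform if every member of $F$ has size $\mu$. For a tree $(T,<_T)$ of height $\kappa$ with levels $T_\alpha$, an $F$-ascent path is a sequence $\langle f_\alpha\mid\alpha<\kappa\rangle$ with $f_\alpha:\mu\to T_\alpha$ such that for all $\alpha<\beta<\kappa$, $\{i<\mu\mid f_\alpha(i)<_T f_\beta(i)\}\in F$. For sets of ordinals, $\alpha<b$ means $\alpha<\beta$ for all $\beta\in b$. $\mathrm{Pr}_1(\kappa,\kappa,\theta,(2,\chi))$ asserts the existence of $c:[\kappa]^2\to\theta$ such that for every $A\in[\kappa]^\kappa$, every $\sigma<\chi$, every pairwise disjoint family $\mathcal B\subseteq[\kappa]^\sigma$ of size $\kappa$, and every $\tau<\theta$, there are $\alpha\in A$ and $b\in\mathcal B$ with $\alpha<b$ and $c[\{\alpha\}\times b]=\{\tau\}$. *)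

theory Defs
  imports Main "HOL-Library.Equipollence" "HOL-Library.Countable_Set"
begin

text \<open>The cardinal kappa is represented as the order type of a wellorder type 'k
  that is an initial ordinal (every proper initial segment has smaller cardinality).\<close>

definition initial_type :: "'k::wellorder itself \<Rightarrow> bool" where
  "initial_type _ \<longleftrightarrow> (\<forall>\<alpha>::'k. {\<beta>. \<beta> < \<alpha>} \<prec> (UNIV::'k set))"

definition strongly_inaccessible :: "'k::wellorder itself \<Rightarrow> bool" where
  "strongly_inaccessible K \<longleftrightarrow>
     initial_type K \<and>
     uncountable (UNIV::'k set) \<and>
     \<comment> \<open>regular: every subset of size less than kappa is bounded\<close>
     (\<forall>X::'k set. X \<prec> (UNIV::'k set) \<longrightarrow> (\<exists>\<alpha>. \<forall>x\<in>X. x < \<alpha>)) \<and>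
     \<comment> \<open>strong limit: 2^lambda < kappa for lambda < kappa\<close>
     (\<forall>X::'k set. X \<prec> (UNIV::'k set) \<longrightarrow> Pow X \<prec> (UNIV::'k set))"

text \<open>A tree (T, lt) with height function ht: for each node x, ht is an order isomorphism
  from the predecessors of x onto the ordinal ht x (so ht x is the height of x).\<close>

definition is_tree :: "'n set \<Rightarrow> ('n \<Rightarrow> 'n \<Rightarrow> bool) \<Rightarrow> ('n \<Rightarrow> 'k::wellorder) \<Rightarrow> bool" where
  "is_tree T lt ht \<longleftrightarrow>
     (\<forall>x\<in>T. \<not> lt x x) \<and>
     (\<forall>x\<in>T. \<forall>y\<in>T. \<forall>z\<in>T. lt x y \<and> lt y z \<longrightarrow> lt x z) \<and>
     (\<forall>x\<in>T. bij_betw ht {y\<in>T. lt y x} {\<beta>. \<beta> < ht x} \<and>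
        (\<forall>y\<in>T. \<forall>z\<in>T. lt y x \<and> lt z x \<longrightarrow> (lt y z \<longleftrightarrow> ht y < ht z)))"

definition tree_level :: "'n set \<Rightarrow> ('n \<Rightarrow> 'k::wellorder) \<Rightarrow> 'k \<Rightarrow> 'n set" where
  "tree_level T ht \<alpha> = {x\<in>T. ht x = \<alpha>}"

definition kappa_tree :: "'n set \<Rightarrow> ('n \<Rightarrow> 'n \<Rightarrow> bool) \<Rightarrow> ('n \<Rightarrow> 'k::wellorder) \<Rightarrow> bool" where
  "kappa_tree T lt ht \<longleftrightarrow> is_tree T lt ht \<and>
     (\<forall>\<alpha>. tree_level T ht \<alpha> \<noteq> {}) \<and>
     (\<forall>\<alpha>. tree_level T ht \<alpha> \<prec> (UNIV::'k set))"

definition cofinal_branch :: "'n set \<Rightarrow> ('n \<Rightarrow> 'n \<Rightarrow> bool) \<Rightarrow> ('n \<Rightarrow> 'k::wellorder) \<Rightarrow> 'n set \<Rightarrow> bool" where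
  "cofinal_branch T lt ht B \<longleftrightarrow> B \<subseteq> T \<and>
     (\<forall>x\<in>B. \<forall>y\<in>B. x = y \<or> lt x y \<or> lt y x) \<and>
     (\<forall>x\<in>B. \<forall>y\<in>T. lt y x \<longrightarrow> y \<in> B) \<and>
     (\<forall>\<alpha>. B \<inter> tree_level T ht \<alpha> \<noteq> {})"

definition aronszajn_tree :: "'n set \<Rightarrow> ('n \<Rightarrow> 'n \<Rightarrow> bool) \<Rightarrow> ('n \<Rightarrow> 'k::wellorder) \<Rightarrow> bool" where
  "aronszajn_tree T lt ht \<longleftrightarrow> kappa_tree T lt ht \<and> \<not> (\<exists>B. cofinal_branch T lt ht B)"

text \<open>Filters on mu = UNIV::'m set are Isabelle filters; X \<in> F iff eventually (\<lambda>i. i \<in> X) F.\<close>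

definition uniform_filter :: "'m filter \<Rightarrow> bool" where
  "uniform_filter F \<longleftrightarrow> (\<forall>X. eventually (\<lambda>i. i \<in> X) F \<longrightarrow> X \<approx> (UNIV::'m set))"

definition ascent_path :: "'m filter \<Rightarrow> 'n set \<Rightarrow> ('n \<Rightarrow> 'n \<Rightarrow> bool) \<Rightarrow> ('n \<Rightarrow> 'k::wellorder)
    \<Rightarrow> ('k \<Rightarrow> 'm \<Rightarrow> 'n) \<Rightarrow> bool" where
  "ascent_path F T lt ht f \<longleftrightarrow>
     (\<forall>\<alpha> i. f \<alpha> i \<in> tree_level T ht \<alpha>) \<and>
     (\<forall>\<alpha> \<beta>. \<alpha> < \<beta> \<longrightarrow> eventually (\<lambda>i. lt (f \<alpha> i) (f \<beta> i)) F)"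

text \<open>Pr_1(kappa, kappa, theta, (2, chi)) with chi = |M|^+: sigma < chi ranges over the
  cardinalities |S| of subsets S of M. Colourings c of [kappa]^2 are given as c alpha beta
  for alpha < beta.\<close>

definition Pr1_succ :: "'k::wellorder itself \<Rightarrow> nat \<Rightarrow> 'm set \<Rightarrow> bool" where
  "Pr1_succ _ \<theta> M \<longleftrightarrow>
     (\<exists>c::'k \<Rightarrow> 'k \<Rightarrow> nat. (\<forall>\<alpha> \<beta>. \<alpha> < \<beta> \<longrightarrow> c \<alpha> \<beta> < \<theta>) \<and>
       (\<forall>(A::'k set) (B::'k set set) \<tau>.
          A \<approx> (UNIV::'k set) \<and> B \<approx> (UNIV::'k set) \<and> pairwise disjnt B \<and>
          (\<exists>S\<subseteq>M. \<forall>b\<in>B. b \<approx> S) \<and> \<tau> < \<theta> \<longrightarrow>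
          (\<exists>\<alpha>\<in>A. \<exists>b\<in>B. \<forall>\<beta>\<in>b. \<alpha> < \<beta> \<and> c \<alpha> \<beta> = \<tau>)))"

end

theory Submission
  imports Defs "HOL-Library.Disjoint_Sets"
begin

(*
  Let c witness Pr_1(kappa, kappa, 2, (2, mu^+)). The restrictions c(-, beta) | alpha for
  alpha <= beta, ordered by end-extension, form a kappa-tree T(c): level alpha injects into
  the subsets of alpha, and kappa is strongly inaccessible. Whether or not T(c) has a cofinal
  branch, it carries an F-ascent path (an Aronszajn tree by hypothesis, after copying it onto
  kappa). Writing the i-th node of level d as c(-, beta(d, i)) | d, the colour c(a, beta(d, i))
  is, modulo F, independent of d > a. As F is proper (the only use of uniformity), every a has a
  colour that c(a, beta(d, i)) avoids on an F-positive set of i; let A be an unbounded class of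
  ordinals avoiding the same colour tau. Then for every d the set W(d) of d and one such
  beta(d, i) per a < d has size at most mu, and c[{alpha} x b] = {tau} with alpha < b fails
  whenever alpha is in A and b contains W(d). Regularity of kappa yields kappa many pairwise
  disjoint sets W(d), which can be padded to a common size below mu^+ while staying disjoint,
  contradicting Pr_1.
*)

section \<open>Cardinality\<close>

lemma lepoll_iff_card_of_ordLeq: "A \<lesssim> B \<longleftrightarrow> ordLeq2 (card_of A) (card_of B)"
  by (simp add: lepoll_def card_of_ordLeq[symmetric])

lemma lepoll_total: "A \<lesssim> B \<or> B \<lesssim> A"
  unfolding lepoll_iff_card_of_ordLeq
  by (rule ordLeq_total[OF card_of_Well_order card_of_Well_order])

lemma times_self_eqpoll_infinite: "infinite A \<Longrightarrow> A \<times> A \<approx> A"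
  by (simp add: eqpoll_iff_card_of_ordIso card_of_Times_same_infinite)

lemma Un_lepoll_infinite: "infinite C \<Longrightarrow> A \<lesssim> C \<Longrightarrow> B \<lesssim> C \<Longrightarrow> A \<union> B \<lesssim> C"
  unfolding lepoll_iff_card_of_ordLeq
  by (rule card_of_Un_ordLeq_infinite_Field) (auto simp: Field_card_of card_of_Card_order card_of_card_order_on)

context
  assumes SI: "strongly_inaccessible TYPE('k::wellorder)"
begin

lemma strongly_inaccessible_lessThan_lesspoll: "{..<\<alpha>::'k} \<prec> (UNIV::'k set)"
proof -
  have "initial_type TYPE('k)"
    using SI by (simp add: strongly_inaccessible_def)
  then show ?thesis
    by (simp add: initial_type_def lessThan_def)
qed

lemma strongly_inaccessible_bounded: "(X::'k set) \<prec> (UNIV::'k set) \<Longrightarrow> \<exists>\<alpha>. \<forall>x\<in>X. x < \<alpha>"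
  using SI by (simp add: strongly_inaccessible_def)

lemma strongly_inaccessible_Pow_lesspoll: "(X::'k set) \<prec> (UNIV::'k set) \<Longrightarrow> Pow X \<prec> (UNIV::'k set)"
  using SI by (simp add: strongly_inaccessible_def)

lemma strongly_inaccessible_infinite: "infinite (UNIV::'k set)"
  using SI countable_finite by (auto simp: strongly_inaccessible_def)

lemma strongly_inaccessible_gt_ex: "\<exists>\<beta>. (\<alpha>::'k) < \<beta>"
proof (rule ccontr)
  assume "\<nexists>\<beta>. \<alpha> < \<beta>"
  then have UNIV_eq: "UNIV = insert \<alpha> {..<\<alpha>}"
    by (auto simp: not_less_iff_gr_or_eq)
  then have "infinite {..<\<alpha>}"
    using strongly_inaccessible_infinite by (metis finite_insert)
  then have "(UNIV::'k set) \<approx> {..<\<alpha>}"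
    by (metis UNIV_eq infinite_insert_eqpoll)
  with strongly_inaccessible_lessThan_lesspoll show False
    by (meson eqpoll_sym lesspoll_def)
qed

lemma strongly_inaccessible_atMost_lesspoll: "{..\<alpha>::'k} \<prec> (UNIV::'k set)"
proof -
  obtain \<beta> where "\<alpha> < \<beta>"
    using strongly_inaccessible_gt_ex by blast
  then have "{..\<alpha>} \<lesssim> {..<\<beta>}"
    by (intro subset_imp_lepoll) auto
  then show ?thesis
    using strongly_inaccessible_lessThan_lesspoll by (rule lesspoll_trans1)
qed

lemma strongly_inaccessible_unbounded_eqpoll:
  assumes "\<forall>\<alpha>. \<exists>x\<in>X. \<alpha> \<le> x"
  shows "(X::'k set) \<approx> (UNIV::'k set)"
proof -
  have "\<not> X \<prec> (UNIV::'k set)"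
  proof
    assume "X \<prec> (UNIV::'k set)"
    then obtain \<alpha> where "\<forall>x\<in>X. x < \<alpha>"
      using strongly_inaccessible_bounded by blast
    moreover obtain x where "x \<in> X" "\<alpha> \<le> x"
      using assms by blast
    ultimately show False
      by (simp add: not_less[symmetric])
  qed
  then show ?thesis
    by (simp add: lesspoll_def subset_imp_lepoll)
qed

lemma strongly_inaccessible_ex_sequence_above: "\<exists>h::'k \<Rightarrow> 'k. \<forall>\<eta> \<xi>. \<eta> < \<xi> \<longrightarrow> g (h \<eta>) < h \<xi>"
proof -
  define h where "h = wfrec {(x::'k, y). x < y} (\<lambda>h \<xi>. SOME \<delta>. \<forall>\<eta><\<xi>. g (h \<eta>) < \<delta>)"
  have h_eq: "h \<xi> = (SOME \<delta>. \<forall>\<eta><\<xi>. g (h \<eta>) < \<delta>)" for \<xi>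
    unfolding h_def by (subst wfrec[OF wf]) (simp add: cut_def)
  have "\<exists>\<delta>. \<forall>\<eta><\<xi>. g (h \<eta>) < \<delta>" for \<xi>
  proof -
    have "(\<lambda>\<eta>. g (h \<eta>)) ` {..<\<xi>} \<prec> (UNIV::'k set)"
      using image_lepoll strongly_inaccessible_lessThan_lesspoll by (rule lesspoll_trans1)
    then show ?thesis
      using strongly_inaccessible_bounded by force
  qed
  then have "\<forall>\<eta><\<xi>. g (h \<eta>) < h \<xi>" for \<xi>
    unfolding h_eq[of \<xi>] by (rule someI_ex)
  then show ?thesis
    by blast
qed

end

section \<open>Isomorphic trees\<close>

text \<open>The hypothesis on ascent paths only speaks about trees whose nodes are ordinals below
  kappa; isomorphic copies transfer it to trees on other node types.\<close>

definition tree_iso :: "('a \<Rightarrow> 'b) \<Rightarrow> 'a set \<Rightarrow> ('a \<Rightarrow> 'a \<Rightarrow> bool) \<Rightarrow> ('a \<Rightarrow> 'k::wellorder)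
    \<Rightarrow> 'b set \<Rightarrow> ('b \<Rightarrow> 'b \<Rightarrow> bool) \<Rightarrow> ('b \<Rightarrow> 'k) \<Rightarrow> bool" where
  "tree_iso e T lt ht T' lt' ht' \<longleftrightarrow> bij_betw e T T' \<and>
     (\<forall>x\<in>T. \<forall>y\<in>T. lt' (e x) (e y) \<longleftrightarrow> lt x y) \<and> (\<forall>x\<in>T. ht' (e x) = ht x)"

lemma tree_iso_image:
  assumes "inj_on e T"
  shows "tree_iso e T lt ht (e ` T) (\<lambda>x y. lt (inv_into T e x) (inv_into T e y)) (\<lambda>x. ht (inv_into T e x))"
  using assms by (simp add: tree_iso_def inj_on_imp_bij_betw)

lemma is_treeD:
  assumes "is_tree T lt ht" and "x \<in> T"
  shows "\<not> lt x x" and "bij_betw ht {y\<in>T. lt y x} {\<beta>. \<beta> < ht x}"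
    and "y \<in> T \<Longrightarrow> z \<in> T \<Longrightarrow> lt x y \<Longrightarrow> lt y z \<Longrightarrow> lt x z"
    and "y \<in> T \<Longrightarrow> z \<in> T \<Longrightarrow> lt y x \<Longrightarrow> lt z x \<Longrightarrow> lt y z \<longleftrightarrow> ht y < ht z"
  using assms unfolding is_tree_def by blast+

context
  fixes e :: "'a \<Rightarrow> 'b" and T :: "'a set" and lt :: "'a \<Rightarrow> 'a \<Rightarrow> bool" and ht :: "'a \<Rightarrow> 'k::wellorder"
    and T' :: "'b set" and lt' :: "'b \<Rightarrow> 'b \<Rightarrow> bool" and ht' :: "'b \<Rightarrow> 'k"
  assumes iso: "tree_iso e T lt ht T' lt' ht'"
begin

lemma tree_iso_bij: "bij_betw e T T'"
  and tree_iso_less: "x \<in> T \<Longrightarrow> y \<in> T \<Longrightarrow> lt' (e x) (e y) \<longleftrightarrow> lt x y"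
  and tree_iso_height: "x \<in> T \<Longrightarrow> ht' (e x) = ht x"
  using iso by (simp_all add: tree_iso_def)

lemma tree_iso_image_eq: "T' = e ` T"
  using tree_iso_bij by (simp add: bij_betw_def)

lemma tree_iso_inv: "tree_iso (inv_into T e) T' lt' ht' T lt ht"
proof -
  have inv: "inv_into T e x' \<in> T" "e (inv_into T e x') = x'" if "x' \<in> T'" for x'
    using that tree_iso_image_eq by (auto intro: inv_into_into f_inv_into_f)
  show ?thesis
    unfolding tree_iso_def
    using bij_betw_inv_into[OF tree_iso_bij] tree_iso_less[OF inv(1) inv(1)] tree_iso_height[OF inv(1)]
    by (simp add: inv(2))
qed

lemma tree_level_iso: "tree_level T' ht' \<alpha> = e ` tree_level T ht \<alpha>"
  unfolding tree_level_def tree_iso_image_eq using tree_iso_height by auto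

lemma is_tree_iso:
  assumes tree: "is_tree T lt ht"
  shows "is_tree T' lt' ht'"
  unfolding is_tree_def
proof (intro conjI ballI impI)
  have preimage: "\<exists>x\<in>T. x' = e x" if "x' \<in> T'" for x'
    using that tree_iso_image_eq by blast
  fix x' assume "x' \<in> T'"
  then obtain x where x: "x \<in> T" "x' = e x"
    using preimage by blast
  show "\<not> lt' x' x'"
    using is_treeD(1)[OF tree x(1)] tree_iso_less[OF x(1) x(1)] x(2) by simp
  have preds: "{y'\<in>T'. lt' y' x'} = e ` {y\<in>T. lt y x}"
    unfolding tree_iso_image_eq x(2) using tree_iso_less x(1) by auto
  have "bij_betw e {y\<in>T. lt y x} (e ` {y\<in>T. lt y x})"
    using tree_iso_bij by (auto simp: bij_betw_def intro: inj_on_subset)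
  moreover have "bij_betw (ht' \<circ> e) {y\<in>T. lt y x} {\<beta>. \<beta> < ht x}"
    using is_treeD(2)[OF tree x(1)] by (subst bij_betw_cong[where g = ht]) (simp_all add: tree_iso_height)
  ultimately have "bij_betw ht' (e ` {y\<in>T. lt y x}) {\<beta>. \<beta> < ht x}"
    by (simp add: bij_betw_comp_iff)
  then show "bij_betw ht' {y'\<in>T'. lt' y' x'} {\<beta>. \<beta> < ht' x'}"
    unfolding preds unfolding x(2) tree_iso_height[OF x(1)] .
  fix y' z' assume "y' \<in> T'" "z' \<in> T'"
  then obtain y z where y: "y \<in> T" "y' = e y" and z: "z \<in> T" "z' = e z"
    using preimage by blast
  show "lt' x' z'" if "lt' x' y' \<and> lt' y' z'"
    using that is_treeD(3)[OF tree x(1) y(1) z(1)] by (simp add: x y z tree_iso_less)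
  show "lt' y' z' \<longleftrightarrow> ht' y' < ht' z'" if "lt' y' x' \<and> lt' z' x'"
    using that is_treeD(4)[OF tree x(1) y(1) z(1)] by (simp add: x y z tree_iso_less tree_iso_height)
qed

lemma cofinal_branch_iso:
  assumes "cofinal_branch T lt ht B"
  shows "cofinal_branch T' lt' ht' (e ` B)"
proof -
  have sub: "B \<subseteq> T"
    and lin: "\<And>x y. x \<in> B \<Longrightarrow> y \<in> B \<Longrightarrow> x = y \<or> lt x y \<or> lt y x"
    and down: "\<And>x y. x \<in> B \<Longrightarrow> y \<in> T \<Longrightarrow> lt y x \<Longrightarrow> y \<in> B"
    and meets: "\<And>\<alpha>. B \<inter> tree_level T ht \<alpha> \<noteq> {}"
    using assms unfolding cofinal_branch_def by blast+
  show ?thesis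
    unfolding cofinal_branch_def tree_level_iso unfolding tree_iso_image_eq
  proof (intro conjI ballI allI impI)
    show "e ` B \<subseteq> e ` T"
      using sub by blast
    show "e ` B \<inter> e ` tree_level T ht \<alpha> \<noteq> {}" for \<alpha>
      using meets[of \<alpha>] by blast
    fix x' assume "x' \<in> e ` B"
    then obtain x where x: "x \<in> B" "x' = e x"
      by blast
    fix y' assume "y' \<in> e ` B"
    then obtain y where y: "y \<in> B" "y' = e y"
      by blast
    show "x' = y' \<or> lt' x' y' \<or> lt' y' x'"
      using lin[OF x(1) y(1)] sub x y by (auto simp: tree_iso_less subset_eq)
  next
    fix x' y' assume "x' \<in> e ` B" "y' \<in> e ` T" "lt' y' x'"
    then obtain x y where "x \<in> B" "y \<in> T" "lt y x" "y' = e y"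
      using sub tree_iso_less by blast
    then show "y' \<in> e ` B"
      using down by blast
  qed
qed

lemma ascent_path_iso:
  assumes "ascent_path F T lt ht f"
  shows "ascent_path F T' lt' ht' (\<lambda>\<alpha> i. e (f \<alpha> i))"
proof -
  have "f \<alpha> i \<in> T" for \<alpha> i
    using assms by (simp add: ascent_path_def tree_level_def)
  with assms show ?thesis
    unfolding ascent_path_def tree_level_iso by (simp add: tree_iso_less)
qed

end

lemma aronszajn_tree_iso:
  fixes ht :: "'a \<Rightarrow> 'k::wellorder"
  assumes iso: "tree_iso e T lt ht T' lt' ht'" and aronszajn: "aronszajn_tree T lt ht"
  shows "aronszajn_tree T' lt' ht'"
proof -
  have "is_tree T lt ht" "\<forall>\<alpha>. tree_level T ht \<alpha> \<noteq> {}" "\<forall>\<alpha>. tree_level T ht \<alpha> \<prec> (UNIV::'k set)"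
    using aronszajn by (simp_all add: aronszajn_tree_def kappa_tree_def)
  then have "kappa_tree T' lt' ht'"
    unfolding kappa_tree_def tree_level_iso[OF iso]
    using is_tree_iso[OF iso] image_lepoll lesspoll_trans1 by blast
  moreover have "\<not> cofinal_branch T' lt' ht' B" for B
    using cofinal_branch_iso[OF tree_iso_inv[OF iso]] aronszajn by (auto simp: aronszajn_tree_def)
  ultimately show ?thesis
    by (simp add: aronszajn_tree_def)
qed

lemma is_tree_less_height:
  assumes "is_tree T lt ht" "x \<in> T" "y \<in> T" "lt y x"
  shows "ht y < ht x"
  using bij_betw_apply[OF is_treeD(2)[OF assms(1,2)]] assms(3,4) by simp

lemma cofinal_branch_ascent_path:
  fixes F :: "'m filter"
  assumes tree: "is_tree T lt ht" and branch: "cofinal_branch T lt ht B"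
  shows "\<exists>f. ascent_path F T lt ht f"
proof -
  define f where "f \<alpha> (i::'m) = (SOME x. x \<in> B \<inter> tree_level T ht \<alpha>)" for \<alpha> i
  have f: "f \<alpha> i \<in> B \<inter> tree_level T ht \<alpha>" for \<alpha> i
    unfolding f_def some_in_eq using branch by (simp add: cofinal_branch_def)
  have "lt (f \<alpha> i) (f \<beta> i)" if "\<alpha> < \<beta>" for \<alpha> \<beta> i
  proof -
    have "B \<subseteq> T" and lin: "\<forall>x\<in>B. \<forall>y\<in>B. x = y \<or> lt x y \<or> lt y x"
      using branch by (simp_all add: cofinal_branch_def)
    moreover have "ht (f \<alpha> i) = \<alpha>" "ht (f \<beta> i) = \<beta>"
      using f by (simp_all add: tree_level_def)
    ultimately show ?thesis
      using f[of \<alpha> i] f[of \<beta> i] that is_tree_less_height[OF tree, of "f \<alpha> i" "f \<beta> i"]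
      by (metis IntD1 less_asym less_irrefl subsetD)
  qed
  then have "ascent_path F T lt ht f"
    unfolding ascent_path_def using f by (simp add: always_eventually)
  then show ?thesis by blast
qed

lemma kappa_tree_ascent_path:
  fixes T :: "'n set" and ht :: "'n \<Rightarrow> 'k::wellorder" and F :: "'m filter"
  assumes ascent_paths: "\<forall>(T::'k set) (lt::'k \<Rightarrow> 'k \<Rightarrow> bool) (ht::'k \<Rightarrow> 'k).
      aronszajn_tree T lt ht \<longrightarrow> (\<exists>f. ascent_path F T lt ht f)"
    and kappa: "kappa_tree T lt ht" and small: "T \<lesssim> (UNIV::'k set)"
  shows "\<exists>f. ascent_path F T lt ht f"
proof (cases "\<exists>B. cofinal_branch T lt ht B")
  case True
  with kappa show ?thesis
    using cofinal_branch_ascent_path by (auto simp: kappa_tree_def)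
next
  case False
  obtain e :: "'n \<Rightarrow> 'k" where "inj_on e T"
    using small by (auto simp: lepoll_def)
  then have iso: "tree_iso e T lt ht (e ` T) (\<lambda>x y. lt (inv_into T e x) (inv_into T e y))
      (\<lambda>x. ht (inv_into T e x))"
    by (rule tree_iso_image)
  have "aronszajn_tree T lt ht"
    using kappa False by (simp add: aronszajn_tree_def)
  then obtain f where "ascent_path F (e ` T) (\<lambda>x y. lt (inv_into T e x) (inv_into T e y))
      (\<lambda>x. ht (inv_into T e x)) f"
    using ascent_paths aronszajn_tree_iso[OF iso] by blast
  then show ?thesis
    using ascent_path_iso[OF tree_iso_inv[OF iso]] by blast
qed

section \<open>The tree of a colouring\<close>

definition colour_tree :: "('k::wellorder \<Rightarrow> 'k \<Rightarrow> nat) \<Rightarrow> ('k \<times> ('k \<Rightarrow> nat)) set" where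
  "colour_tree c = {(\<alpha>, restrict (\<lambda>\<xi>. c \<xi> \<beta>) {..<\<alpha>}) | \<alpha> \<beta>. \<alpha> \<le> \<beta>}"

definition colour_tree_less :: "'k::wellorder \<times> ('k \<Rightarrow> nat) \<Rightarrow> 'k \<times> ('k \<Rightarrow> nat) \<Rightarrow> bool" where
  "colour_tree_less x y \<longleftrightarrow> fst x < fst y \<and> snd x = restrict (snd y) {..<fst x}"

lemma lessThan_Int_lessThan_absorb: "(a::'a::linorder) \<le> b \<Longrightarrow> {..<b} \<inter> {..<a} = {..<a}"
  by auto

lemma colour_tree_predecessors:
  assumes "x \<in> colour_tree c"
  shows "{y\<in>colour_tree c. colour_tree_less y x} = (\<lambda>a. (a, restrict (snd x) {..<a})) ` {..<fst x}"
proof -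
  obtain \<alpha> \<beta> where x: "x = (\<alpha>, restrict (\<lambda>\<xi>. c \<xi> \<beta>) {..<\<alpha>})" "\<alpha> \<le> \<beta>"
    using assms by (auto simp: colour_tree_def)
  have "(a, restrict (snd x) {..<a}) \<in> colour_tree c" if "a < \<alpha>" for a
    using that x unfolding colour_tree_def
    by (auto simp: lessThan_Int_lessThan_absorb intro!: exI[of _ \<beta>])
  then show ?thesis
    using x by (auto simp: colour_tree_less_def image_iff)
qed

lemma is_tree_colour_tree: "is_tree (colour_tree c) colour_tree_less fst"
  unfolding is_tree_def
proof (intro conjI ballI impI)
  fix x assume x: "x \<in> colour_tree c"
  show "\<not> colour_tree_less x x"
    by (simp add: colour_tree_less_def)
  show "bij_betw fst {y\<in>colour_tree c. colour_tree_less y x} {\<beta>. \<beta> < fst x}"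
    unfolding colour_tree_predecessors[OF x] by (simp add: bij_betw_def inj_on_def image_image lessThan_def)
  fix y z assume "y \<in> colour_tree c" "z \<in> colour_tree c"
  show "colour_tree_less x z" if "colour_tree_less x y \<and> colour_tree_less y z"
    using that by (auto simp: colour_tree_less_def lessThan_Int_lessThan_absorb)
  show "colour_tree_less y z \<longleftrightarrow> fst y < fst z" if "colour_tree_less y x \<and> colour_tree_less z x"
    using that by (auto simp: colour_tree_less_def lessThan_Int_lessThan_absorb)
qed

lemma tree_level_colour_tree:
  "tree_level (colour_tree c) fst \<alpha> = (\<lambda>\<beta>. (\<alpha>, restrict (\<lambda>\<xi>. c \<xi> \<beta>) {..<\<alpha>})) ` {\<alpha>..}"
  by (auto simp: tree_level_def colour_tree_def)

lemma kappa_tree_colour_tree: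
  assumes SI: "strongly_inaccessible TYPE('k::wellorder)"
    and two_colours: "\<forall>\<alpha> \<beta>. \<alpha> < \<beta> \<longrightarrow> c \<alpha> \<beta> < (2::nat)"
  shows "kappa_tree (colour_tree (c::'k \<Rightarrow> 'k \<Rightarrow> nat)) colour_tree_less fst"
  unfolding kappa_tree_def
proof (intro conjI allI is_tree_colour_tree)
  fix \<alpha> :: 'k
  show "tree_level (colour_tree c) fst \<alpha> \<noteq> {}"
    unfolding tree_level_colour_tree by auto
  let ?ones = "\<lambda>x. {\<xi>\<in>{..<\<alpha>}. snd x \<xi> = 1}"
  have "inj_on ?ones (tree_level (colour_tree c) fst \<alpha>)"
  proof (rule inj_onI)
    fix x y
    assume "x \<in> tree_level (colour_tree c) fst \<alpha>" "y \<in> tree_level (colour_tree c) fst \<alpha>"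
      and ones: "?ones x = ?ones y"
    then obtain \<beta> \<gamma> where x: "x = (\<alpha>, restrict (\<lambda>\<xi>. c \<xi> \<beta>) {..<\<alpha>})" "\<alpha> \<le> \<beta>"
      and y: "y = (\<alpha>, restrict (\<lambda>\<xi>. c \<xi> \<gamma>) {..<\<alpha>})" "\<alpha> \<le> \<gamma>"
      unfolding tree_level_colour_tree by auto
    have "c \<xi> \<beta> = c \<xi> \<gamma>" if "\<xi> < \<alpha>" for \<xi>
    proof -
      have "c \<xi> \<beta> < 2" "c \<xi> \<gamma> < 2"
        using two_colours less_le_trans[OF that x(2)] less_le_trans[OF that y(2)] by simp_all
      moreover have "\<xi> \<in> ?ones x \<longleftrightarrow> \<xi> \<in> ?ones y"
        using ones by simp
      then have "c \<xi> \<beta> = 1 \<longleftrightarrow> c \<xi> \<gamma> = 1"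
        using that by (simp add: x y)
      ultimately show ?thesis
        by linarith
    qed
    then show "x = y"
      using x y by (auto simp: fun_eq_iff)
  qed
  moreover have "?ones ` tree_level (colour_tree c) fst \<alpha> \<subseteq> Pow {..<\<alpha>}"
    by auto
  ultimately have "tree_level (colour_tree c) fst \<alpha> \<lesssim> Pow {..<\<alpha>}"
    unfolding lepoll_def by blast
  then show "tree_level (colour_tree c) fst \<alpha> \<prec> (UNIV::'k set)"
    using strongly_inaccessible_Pow_lesspoll[OF SI strongly_inaccessible_lessThan_lesspoll[OF SI]]
    by (rule lesspoll_trans1)
qed

lemma colour_tree_lepoll:
  assumes SI: "strongly_inaccessible TYPE('k::wellorder)"
  shows "colour_tree (c::'k \<Rightarrow> 'k \<Rightarrow> nat) \<lesssim> (UNIV::'k set)"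
proof -
  have "colour_tree c \<subseteq> (\<lambda>(\<alpha>, \<beta>). (\<alpha>, restrict (\<lambda>\<xi>. c \<xi> \<beta>) {..<\<alpha>})) ` (UNIV \<times> UNIV)"
    by (auto simp: colour_tree_def)
  then have "colour_tree c \<lesssim> (UNIV::'k set) \<times> (UNIV::'k set)"
    by (rule subset_image_lepoll)
  also have "\<dots> \<approx> (UNIV::'k set)"
    by (rule times_self_eqpoll_infinite[OF strongly_inaccessible_infinite[OF SI]])
  finally show ?thesis .
qed

text \<open>Obtained from an F-ascent path through the tree of c by writing its i-th node at level d
  as c(-, \<beta> d i) restricted to d.\<close>

definition coherent_choice :: "'m filter \<Rightarrow> ('k::wellorder \<Rightarrow> 'k \<Rightarrow> nat) \<Rightarrow> ('k \<Rightarrow> 'm \<Rightarrow> 'k) \<Rightarrow> bool" where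
  "coherent_choice F c \<beta> \<longleftrightarrow>
     (\<forall>a d d'. a < d \<longrightarrow> a < d' \<longrightarrow> eventually (\<lambda>i. c a (\<beta> d i) = c a (\<beta> d' i)) F)"

lemma colour_tree_ascent_path_coherent:
  fixes c :: "'k::wellorder \<Rightarrow> 'k \<Rightarrow> nat" and F :: "'m filter"
  assumes path: "ascent_path F (colour_tree c) colour_tree_less fst P"
  shows "\<exists>\<beta>. (\<forall>d i. d \<le> \<beta> d i) \<and> coherent_choice F c \<beta>"
proof -
  have "\<exists>\<beta>\<ge>d. P d i = (d, restrict (\<lambda>\<xi>. c \<xi> \<beta>) {..<d})" for d i
    using path unfolding ascent_path_def tree_level_colour_tree by blast
  then obtain \<beta> where \<beta>: "d \<le> \<beta> d i" "P d i = (d, restrict (\<lambda>\<xi>. c \<xi> (\<beta> d i)) {..<d})" for d i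
    by metis
  have coherent: "eventually (\<lambda>i. c a (\<beta> d i) = c a (\<beta> d' i)) F" if "a < d" "d < d'" for a d d'
  proof -
    have "eventually (\<lambda>i. colour_tree_less (P d i) (P d' i)) F"
      using path that(2) by (simp add: ascent_path_def)
    then show ?thesis
    proof (rule eventually_mono)
      fix i assume "colour_tree_less (P d i) (P d' i)"
      then have "restrict (\<lambda>\<xi>. c \<xi> (\<beta> d i)) {..<d} a = restrict (\<lambda>\<xi>. c \<xi> (\<beta> d' i)) {..<d} a"
        using that by (simp add: colour_tree_less_def \<beta>(2) lessThan_Int_lessThan_absorb)
      then show "c a (\<beta> d i) = c a (\<beta> d' i)"
        using that(1) by simp
    qed
  qed
  have "eventually (\<lambda>i. c a (\<beta> d i) = c a (\<beta> d' i)) F" if "a < d" "a < d'" for a d d'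
    using coherent[of a d d'] coherent[of a d' d] that
    by (cases d d' rule: linorder_cases) (auto elim: eventually_mono)
  then show ?thesis
    using \<beta>(1) unfolding coherent_choice_def by blast
qed

section \<open>Refuting Pr1\<close>

definition mono_above :: "('k::wellorder \<Rightarrow> 'k \<Rightarrow> nat) \<Rightarrow> 'k \<Rightarrow> 'k set \<Rightarrow> nat \<Rightarrow> bool" where
  "mono_above c \<alpha> b \<tau> \<longleftrightarrow> (\<forall>\<beta>\<in>b. \<alpha> < \<beta> \<and> c \<alpha> \<beta> = \<tau>)"

lemma mono_above_subset: "b \<subseteq> b' \<Longrightarrow> mono_above c \<alpha> b' \<tau> \<Longrightarrow> mono_above c \<alpha> b \<tau>"
  by (auto simp: mono_above_def)

definition Pr1_colouring :: "('k::wellorder \<Rightarrow> 'k \<Rightarrow> nat) \<Rightarrow> nat \<Rightarrow> 'm set \<Rightarrow> bool" where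
  "Pr1_colouring c \<theta> M \<longleftrightarrow>
     (\<forall>(A::'k set) (B::'k set set) \<tau>.
        A \<approx> (UNIV::'k set) \<and> B \<approx> (UNIV::'k set) \<and> pairwise disjnt B \<and>
        (\<exists>S\<subseteq>M. \<forall>b\<in>B. b \<approx> S) \<and> \<tau> < \<theta> \<longrightarrow> (\<exists>\<alpha>\<in>A. \<exists>b\<in>B. mono_above c \<alpha> b \<tau>))"

lemma Pr1_succ_iff:
  "Pr1_succ TYPE('k::wellorder) \<theta> M \<longleftrightarrow>
    (\<exists>c::'k \<Rightarrow> 'k \<Rightarrow> nat. (\<forall>\<alpha> \<beta>. \<alpha> < \<beta> \<longrightarrow> c \<alpha> \<beta> < \<theta>) \<and> Pr1_colouring c \<theta> M)"
  by (simp add: Pr1_succ_def Pr1_colouring_def mono_above_def)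

lemma coherent_choice_ex_avoided_colour:
  fixes c :: "'k::wellorder \<Rightarrow> 'k \<Rightarrow> nat" and F :: "'m filter" and \<beta> :: "'k \<Rightarrow> 'm \<Rightarrow> 'k"
  assumes SI: "strongly_inaccessible TYPE('k)" and proper: "F \<noteq> bot"
    and coherent: "coherent_choice F c \<beta>"
  shows "\<exists>\<tau><2. \<exists>A. A \<approx> (UNIV::'k set) \<and> (\<forall>a\<in>A. \<forall>d>a. \<exists>i. c a (\<beta> d i) \<noteq> \<tau>)"
proof -
  obtain s :: "'k \<Rightarrow> 'k" where s: "\<And>a. a < s a"
    using strongly_inaccessible_gt_ex[OF SI] by metis
  define colour where "colour a = (if eventually (\<lambda>i. c a (\<beta> (s a) i) = 0) F then 1 else 0::nat)" for a
  have avoided: "\<not> eventually (\<lambda>i. c a (\<beta> (s a) i) = colour a) F" for a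
  proof
    assume colour: "eventually (\<lambda>i. c a (\<beta> (s a) i) = colour a) F"
    then have zero: "eventually (\<lambda>i. c a (\<beta> (s a) i) = 0) F" and "colour a = 1"
      by (auto simp: colour_def split: if_splits)
    from colour zero have "eventually (\<lambda>i. False) F"
      by (rule eventually_elim2) (simp add: \<open>colour a = 1\<close>)
    with proper show False
      by simp
  qed
  obtain \<tau> where \<tau>: "\<tau> < 2" and unbounded: "\<forall>\<alpha>. \<exists>a\<ge>\<alpha>. colour a = \<tau>"
  proof (cases "\<forall>\<alpha>. \<exists>a\<ge>\<alpha>. colour a = 0")
    case True
    then show ?thesis
      using that[of 0] by simp
  next
    case False
    then obtain \<alpha>\<^sub>0 where "\<forall>a\<ge>\<alpha>\<^sub>0. colour a \<noteq> 0"
      by auto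
    then have "\<forall>a\<ge>\<alpha>\<^sub>0. colour a = 1"
      by (auto simp: colour_def split: if_splits)
    then have "\<exists>a\<ge>\<alpha>. colour a = 1" for \<alpha>
      by (intro exI[of _ "max \<alpha> \<alpha>\<^sub>0"]) simp
    then show ?thesis
      using that[of 1] by simp
  qed
  define A where "A = {a. colour a = \<tau>}"
  have "A \<approx> (UNIV::'k set)"
    unfolding A_def using unbounded by (intro strongly_inaccessible_unbounded_eqpoll[OF SI]) auto
  moreover have "\<exists>i. c a (\<beta> d i) \<noteq> \<tau>" if "a \<in> A" "a < d" for a d
  proof (rule ccontr)
    assume "\<nexists>i. c a (\<beta> d i) \<noteq> \<tau>"
    then have "eventually (\<lambda>i. c a (\<beta> d i) = \<tau>) F"
      by simp
    moreover have "eventually (\<lambda>i. c a (\<beta> d i) = c a (\<beta> (s a) i)) F"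
      using coherent that(2) s[of a] by (simp add: coherent_choice_def)
    ultimately have "eventually (\<lambda>i. c a (\<beta> (s a) i) = colour a) F"
      by (rule eventually_elim2) (use that(1) in \<open>simp add: A_def\<close>)
    with avoided show False
      by blast
  qed
  ultimately show ?thesis
    using \<tau> by blast
qed

lemma ex_small_refuting_sets:
  fixes c :: "'k::wellorder \<Rightarrow> 'k \<Rightarrow> nat" and \<beta> :: "'k \<Rightarrow> 'm \<Rightarrow> 'k"
  assumes SI: "strongly_inaccessible TYPE('k)" and infinite: "infinite (UNIV::'m set)"
    and above: "\<forall>d i. d \<le> \<beta> d i"
    and escape: "\<forall>a\<in>A. \<forall>d>a. \<exists>i. c a (\<beta> d i) \<noteq> \<tau>"
  shows "\<exists>W. \<forall>d. d \<in> W d \<and> (\<forall>x\<in>W d. d \<le> x) \<and> W d \<prec> (UNIV::'k set) \<and> W d \<lesssim> (UNIV::'m set) \<and>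
    (\<forall>\<alpha>\<in>A. \<not> mono_above c \<alpha> (W d) \<tau>)"
proof -
  define w where "w a d = (SOME i. c a (\<beta> d i) \<noteq> \<tau>)" for a d
  have w: "c a (\<beta> d (w a d)) \<noteq> \<tau>" if "a \<in> A" "a < d" for a d
    unfolding w_def by (rule someI_ex[OF escape[rule_format, OF that]])
  define W where "W d = (\<lambda>a. if a < d then \<beta> d (w a d) else d) ` {..d}" for d
  have mem: "d \<in> W d" for d
    unfolding W_def by (auto intro: image_eqI[of _ _ d])
  have bounded_below: "d \<le> x" if "x \<in> W d" for x d
    using that above unfolding W_def by auto
  have small: "W d \<prec> (UNIV::'k set)" for d
    unfolding W_def using image_lepoll strongly_inaccessible_atMost_lesspoll[OF SI]
    by (rule lesspoll_trans1)
  have W_lepoll: "W d \<lesssim> (UNIV::'m set)" for d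
  proof -
    have "W d \<subseteq> {d} \<union> range (\<beta> d)"
      unfolding W_def by auto
    moreover have "{d} \<union> range (\<beta> d) \<lesssim> (UNIV::'m set)"
      by (rule Un_lepoll_infinite[OF infinite finite_lepoll_infinite[OF infinite] image_lepoll]) simp
    ultimately show ?thesis
      by (rule lepoll_trans[OF subset_imp_lepoll])
  qed
  have refutes: "\<not> mono_above c \<alpha> (W d) \<tau>" if "\<alpha> \<in> A" for \<alpha> d
  proof
    assume "mono_above c \<alpha> (W d) \<tau>"
    then have all: "\<forall>x\<in>W d. \<alpha> < x \<and> c \<alpha> x = \<tau>"
      by (simp add: mono_above_def)
    then have "\<alpha> < d"
      using mem by blast
    then have "\<beta> d (w \<alpha> d) \<in> W d"
      unfolding W_def by (auto intro: image_eqI[of _ _ \<alpha>])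
    with all w[OF that \<open>\<alpha> < d\<close>] show False
      by blast
  qed
  show ?thesis
    by (intro exI[of _ W] allI conjI ballI mem bounded_below small W_lepoll refutes)
qed

lemma disjoint_subfamily_with_gaps:
  fixes W :: "'k::wellorder \<Rightarrow> 'k set"
  assumes SI: "strongly_inaccessible TYPE('k)"
    and mem: "\<And>d. d \<in> W d" and bounded_below: "\<And>d x. x \<in> W d \<Longrightarrow> d \<le> x"
    and small: "\<And>d. W d \<prec> (UNIV::'k set)"
  shows "\<exists>(h::'k \<Rightarrow> 'k) Z. disjoint_family (\<lambda>\<xi>. W (h \<xi>)) \<and> Z \<approx> (UNIV::'k set) \<and> (\<forall>\<xi>. W (h \<xi>) \<inter> Z = {})"
proof -
  define g where "g d = (SOME \<gamma>. \<forall>x\<in>W d. x < \<gamma>)" for d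
  have bounded_above: "x < g d" if "x \<in> W d" for x d
    using someI_ex[OF strongly_inaccessible_bounded[OF SI small]] that unfolding g_def by blast
  obtain h :: "'k \<Rightarrow> 'k" where h: "\<And>\<eta> \<xi>. \<eta> < \<xi> \<Longrightarrow> g (h \<eta>) < h \<xi>"
    using strongly_inaccessible_ex_sequence_above[OF SI] by blast
  have increasing: "g (h \<eta>) < g (h \<xi>)" if "\<eta> < \<xi>" for \<eta> \<xi>
    using h[OF that] bounded_above[OF mem] by (rule less_trans)
  have W_interval: "h \<xi> \<le> x \<and> x < g (h \<xi>)" if "x \<in> W (h \<xi>)" for x \<xi>
    using that bounded_below bounded_above by blast
  have apart: "W (h \<eta>) \<inter> W (h \<xi>) = {}" if "\<eta> < \<xi>" for \<eta> \<xi>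
  proof -
    have "x < h \<xi>" if "x \<in> W (h \<eta>)" for x
      using less_trans[OF conjunct2[OF W_interval[OF that]] h[OF \<open>\<eta> < \<xi>\<close>]] .
    moreover have "h \<xi> \<le> x" if "x \<in> W (h \<xi>)" for x
      using W_interval[OF that] by simp
    ultimately show ?thesis
      by (force simp: not_less[symmetric])
  qed
  \<comment> \<open>The sets W (h \<xi>) lie in the disjoint intervals [h \<xi>, g (h \<xi>)); Z consists of points in the gaps.\<close>
  define Z where "Z = range (\<lambda>\<xi>. g (h \<xi>))"
  have "disjoint_family (\<lambda>\<xi>. W (h \<xi>))"
    unfolding disjoint_family_on_def
  proof (intro ballI impI)
    fix \<eta> \<xi> :: 'k assume "\<eta> \<noteq> \<xi>"
    then show "W (h \<eta>) \<inter> W (h \<xi>) = {}"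
      using apart[of \<eta> \<xi>] apart[of \<xi> \<eta>] by (cases \<eta> \<xi> rule: linorder_cases) auto
  qed
  moreover have "Z \<approx> (UNIV::'k set)"
  proof -
    have "inj (\<lambda>\<xi>. g (h \<xi>))"
      by (rule injI) (metis increasing less_irrefl neqE)
    then show ?thesis
      unfolding Z_def by (rule inj_on_image_eqpoll_self)
  qed
  moreover have "W (h \<xi>) \<inter> Z = {}" for \<xi>
  proof -
    have "g (h \<eta>) \<notin> W (h \<xi>)" for \<eta>
    proof
      assume "g (h \<eta>) \<in> W (h \<xi>)"
      then have "h \<xi> \<le> g (h \<eta>)" "g (h \<eta>) < g (h \<xi>)"
        using W_interval by blast+
      then show False
        using h[of \<eta> \<xi>] increasing[of \<xi> \<eta>] by (cases \<eta> \<xi> rule: linorder_cases) auto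
    qed
    then show ?thesis
      unfolding Z_def by blast
  qed
  ultimately show ?thesis
    by blast
qed

text \<open>S has cardinality min(mu, kappa).\<close>

lemma ex_infinite_subset_bounding_family:
  fixes W :: "'i \<Rightarrow> 'a set"
  assumes "infinite (UNIV::'m set)" "infinite (UNIV::'k set)"
    and "\<And>d. W d \<lesssim> (UNIV::'m set)" "\<And>d. W d \<prec> (UNIV::'k set)"
  shows "\<exists>S::'m set. infinite S \<and> S \<lesssim> (UNIV::'k set) \<and> (\<forall>d. W d \<lesssim> S)"
  using lepoll_total[of "UNIV::'m set" "UNIV::'k set"]
proof
  assume "(UNIV::'m set) \<lesssim> (UNIV::'k set)"
  with assms(1,3) show ?thesis
    by blast
next
  assume "(UNIV::'k set) \<lesssim> (UNIV::'m set)"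
  then obtain f :: "'k \<Rightarrow> 'm" where "inj f"
    by (auto simp: lepoll_def)
  then have range_f: "range f \<approx> (UNIV::'k set)"
    by (rule inj_on_image_eqpoll_self)
  show ?thesis
  proof (intro exI conjI allI)
    show "infinite (range f)"
      using range_f assms(2) eqpoll_finite_iff by blast
    show "range f \<lesssim> (UNIV::'k set)"
      using range_f by (rule eqpoll_imp_lepoll)
    show "W d \<lesssim> range f" for d
      using assms(4)[of d] eqpoll_sym[OF range_f] lepoll_trans2 lesspoll_imp_lepoll by blast
  qed
qed

lemma disjoint_family_padding:
  fixes W :: "'i \<Rightarrow> 'a set" and S :: "'s set"
  assumes disjoint: "disjoint_family W" and reserve: "(UNIV::'i set) \<times> S \<lesssim> Z"
    and apart: "\<And>\<xi>. W \<xi> \<inter> Z = {}" and infinite: "infinite S" and small: "\<And>\<xi>. W \<xi> \<lesssim> S"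
  shows "\<exists>b. disjoint_family b \<and> (\<forall>\<xi>. W \<xi> \<subseteq> b \<xi> \<and> b \<xi> \<approx> S)"
proof -
  obtain q where q: "inj_on q ((UNIV::'i set) \<times> S)" "q ` ((UNIV::'i set) \<times> S) \<subseteq> Z"
    using reserve by (auto simp: lepoll_def)
  define P where "P \<xi> = q ` ({\<xi>} \<times> S)" for \<xi>
  have P_eqpoll: "P \<xi> \<approx> S" for \<xi>
  proof -
    have "P \<xi> \<approx> {\<xi>} \<times> S"
      unfolding P_def by (rule inj_on_image_eqpoll_self[OF inj_on_subset[OF q(1)]]) auto
    also have "\<dots> \<approx> S"
      by (rule times_singleton_eqpoll)
    finally show ?thesis .
  qed
  define b where "b \<xi> = W \<xi> \<union> P \<xi>" for \<xi>
  have "disjoint_family b"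
    unfolding disjoint_family_on_def
  proof (intro ballI impI)
    fix \<xi> \<eta> :: 'i assume "\<xi> \<noteq> \<eta>"
    then have "W \<xi> \<inter> W \<eta> = {}" "P \<xi> \<inter> P \<eta> = {}"
      using disjoint q(1) by (auto simp: disjoint_family_on_def P_def inj_on_def)
    moreover have "W \<zeta> \<inter> P \<zeta>' = {}" for \<zeta> \<zeta>'
      using apart[of \<zeta>] q(2) unfolding P_def by blast
    ultimately show "b \<xi> \<inter> b \<eta> = {}"
      unfolding b_def by blast
  qed
  moreover have "b \<xi> \<approx> S" for \<xi>
  proof (rule lepoll_antisym)
    show "b \<xi> \<lesssim> S"
      unfolding b_def using infinite small eqpoll_imp_lepoll[OF P_eqpoll] by (rule Un_lepoll_infinite)
    have "P \<xi> \<lesssim> b \<xi>"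
      unfolding b_def by (rule subset_imp_lepoll) simp
    with eqpoll_sym[OF P_eqpoll] show "S \<lesssim> b \<xi>"
      by (rule lepoll_trans1)
  qed
  ultimately show ?thesis
    unfolding b_def by blast
qed

lemma coherent_choice_refutes_Pr1:
  fixes c :: "'k::wellorder \<Rightarrow> 'k \<Rightarrow> nat" and F :: "'m filter" and \<beta> :: "'k \<Rightarrow> 'm \<Rightarrow> 'k"
  assumes SI: "strongly_inaccessible TYPE('k)" and infinite: "infinite (UNIV::'m set)"
    and proper: "F \<noteq> bot" and above: "\<forall>d i. d \<le> \<beta> d i"
    and coherent: "coherent_choice F c \<beta>"
  shows "\<not> Pr1_colouring c 2 (UNIV::'m set)"
proof -
  obtain \<tau> A where \<tau>: "\<tau> < 2" and A: "A \<approx> (UNIV::'k set)"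
    and escape: "\<forall>a\<in>A. \<forall>d>a. \<exists>i. c a (\<beta> d i) \<noteq> \<tau>"
    using coherent_choice_ex_avoided_colour[OF SI proper coherent] by blast
  obtain W where W: "\<forall>d. d \<in> W d \<and> (\<forall>x\<in>W d. d \<le> x) \<and> W d \<prec> (UNIV::'k set) \<and>
      W d \<lesssim> (UNIV::'m set) \<and> (\<forall>\<alpha>\<in>A. \<not> mono_above c \<alpha> (W d) \<tau>)"
    using ex_small_refuting_sets[OF SI infinite above escape] by blast
  obtain h :: "'k \<Rightarrow> 'k" and Z where disjoint: "disjoint_family (\<lambda>\<xi>. W (h \<xi>))"
    and Z: "Z \<approx> (UNIV::'k set)" and apart: "\<And>\<xi>. W (h \<xi>) \<inter> Z = {}"
    using disjoint_subfamily_with_gaps[OF SI, of W] W by blast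
  obtain S :: "'m set" where S: "infinite S" "S \<lesssim> (UNIV::'k set)" and W_S: "\<And>d. W d \<lesssim> S"
    using ex_infinite_subset_bounding_family[OF infinite strongly_inaccessible_infinite[OF SI], of W] W
    by blast
  have "(UNIV::'k set) \<times> S \<lesssim> (UNIV::'k set) \<times> (UNIV::'k set)"
    using S(2) by (rule times_lepoll_mono[OF lepoll_refl])
  also have "\<dots> \<approx> (UNIV::'k set)"
    by (rule times_self_eqpoll_infinite[OF strongly_inaccessible_infinite[OF SI]])
  also have "\<dots> \<approx> Z"
    by (rule eqpoll_sym[OF Z])
  finally obtain b where b: "disjoint_family b" "\<And>\<xi>. W (h \<xi>) \<subseteq> b \<xi>" "\<And>\<xi>. b \<xi> \<approx> S"
    using disjoint_family_padding[OF disjoint _ apart S(1) W_S] by blast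
  have "inj b"
  proof (rule injI)
    fix \<xi> \<eta> assume "b \<xi> = b \<eta>"
    moreover have "h \<xi> \<in> b \<xi>"
      using W b(2) by blast
    ultimately show "\<xi> = \<eta>"
      using b(1) by (auto simp: disjoint_family_on_def)
  qed
  then have "range b \<approx> (UNIV::'k set)"
    by (rule inj_on_image_eqpoll_self)
  moreover have "pairwise disjnt (range b)"
    using b(1) by (rule disjoint_family_on_disjoint_image)
  moreover have "\<forall>x\<in>range b. x \<approx> S"
    using b(3) by blast
  moreover have "\<not> mono_above c \<alpha> (b \<xi>) \<tau>" if "\<alpha> \<in> A" for \<alpha> \<xi>
  proof -
    have "\<not> mono_above c \<alpha> (W (h \<xi>)) \<tau>"
      using W that by blast
    then show ?thesis
      using mono_above_subset[OF b(2)] by blast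
  qed
  ultimately show ?thesis
    unfolding Pr1_colouring_def not_all not_imp
    by (intro exI[of _ A] exI[of _ "range b"] exI[of _ \<tau>] conjI A \<tau>) auto
qed

lemma uniform_filter_nontrivial:
  fixes F :: "'m filter"
  assumes "uniform_filter F"
  shows "F \<noteq> bot"
proof
  assume "F = bot"
  then have "({}::'m set) \<approx> (UNIV::'m set)"
    using assms unfolding uniform_filter_def by auto
  then have "(UNIV::'m set) \<approx> ({}::'m set)"
    by (rule eqpoll_sym)
  then show False
    by simp
qed

theorem theorem4p17:
  fixes F :: "'m filter"
  assumes "infinite (UNIV::'m set)"
    and "uniform_filter F"
    and "strongly_inaccessible TYPE('k::wellorder)"
    and "\<forall>(T::'k set) (lt::'k \<Rightarrow> 'k \<Rightarrow> bool) (ht::'k \<Rightarrow> 'k).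
           aronszajn_tree T lt ht \<longrightarrow> (\<exists>f. ascent_path F T lt ht f)"
  shows "\<not> Pr1_succ TYPE('k) 2 (UNIV::'m set)"
proof
  assume "Pr1_succ TYPE('k) 2 (UNIV::'m set)"
  then obtain c :: "'k \<Rightarrow> 'k \<Rightarrow> nat" where two_colours: "\<forall>\<alpha> \<beta>. \<alpha> < \<beta> \<longrightarrow> c \<alpha> \<beta> < 2"
    and Pr1: "Pr1_colouring c 2 (UNIV::'m set)"
    by (auto simp: Pr1_succ_iff)
  obtain P where "ascent_path F (colour_tree c) colour_tree_less fst P"
    using kappa_tree_ascent_path[OF assms(4) kappa_tree_colour_tree[OF assms(3) two_colours]
        colour_tree_lepoll[OF assms(3)]] by blast
  then obtain \<beta> where above: "\<forall>d i. d \<le> \<beta> d i"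
    and coherent: "coherent_choice F c \<beta>"
    using colour_tree_ascent_path_coherent by blast
  have "\<not> Pr1_colouring c 2 (UNIV::'m set)"
    using coherent_choice_refutes_Pr1[OF assms(3,1) uniform_filter_nontrivial[OF assms(2)] above coherent] .
  with Pr1 show False
    by contradiction
qed

end
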